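(* Let $K$ be a field, $S=K[x_1,\ldots,x_n]$, $I\subset S$ a monomial ideal with $I\ne S$ and $G(I)=\{x^{a_1},\ldots,x^{a_m}\}$. Let $T$ be the polynomial ring over $K$ in variables $x_{l1},\ldots,x_{lm_l}$, $l=1,\ldots,n$, $T_l=K[x_{l1},\ldots,x_{lm_l}]$, and let $\mathfrak{n}$ be the graded maximal ideal of $T$. For $l=1,\ldots,n$, $j=1,\ldots,m$ let $L_{l,a_j(l)}\subset T_l$ be monomial ideals with $L_{l,a_j(l)}\subset L_{l,a_k(l)}$ whenever $a_j(l)\ge a_k(l)$, each having an $a_j(l)$-linear resolution, and let $L_j=\prod_{l=1}^nL_{l,a_j(l)}\subset T$. Let $\mathbb{F}^*$ be the complex of $L_1,\ldots,L_m$ induced by $I$ with differential $\partial^*$. Then $\partial^*(F_i^* )\subset\mathfrak{n}F^*_{i-1}$ for all $i>0$.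
   Context: For $a\in\mathbb{N}^n$, $x^a=x_1^{a(1)}\cdots x_n^{a(n)}$; $G(I)$ is the minimal monomial generating set. An ideal has a $d$-linear resolution if it is generated in degree $d$ and its minimal graded free resolution is linear. Let $0\to F_p\to\cdots\to F_1\to F_0\to S/I\to 0$ be the $\mathbb{Z}^n$-graded minimal free resolution of $S/I$ with differential $\partial$, where $F_0=S$ with basis $f_{01}$ of degree $0$, and $F_i=\bigoplus_{j=1}^{\beta_i}Sf_{ij}$ with $f_{ij}$ homogeneous of multidegree $a_{ij}\in\mathbb{N}^n$; here $\beta_1=m$, $a_{1j}=a_j$, $\partial(f_{1j})=x^{a_j}f_{01}$. Write $\partial(f_{ij})=\sum_k\lambda^{(i)}_{kj}x^{a_{ij}-a_{i-1,k}}f_{i-1,k}$ with $\lambda^{(i)}_{kj}\in K$, where $\lambda^{(i)}_{kj}=0$ whenever $a_{ij}-a_{i-1,k}\notin\mathbb{N}^n$; $\lambda^{(i)}=(\lambda^{(i)}_{kj})$. The complex $\mathbb{F}^*$ has $F^*_0=T$, $F^*_i=\bigoplus_{j=1}^{\beta_i}L_{ij}$ for $1\le i\le p$, where $L_{1j}=L_j$ and for $i\ge2$, $L_{ij}=\bigcap_{k:\lambda^{(i)}_{kj}\ne0}L_{i-1,k}$; $\partial^*:F^*_i\to F^*_{i-1}$ sends a column vector $u$ with $u_j\in L_{ij}$ to $\lambda^{(i)}u$. *)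

theory Defs
  imports Main "HOL-Library.Poly_Mapping"
begin

type_synonym ('v,'k) mpoly = "('v \<Rightarrow>\<^sub>0 nat) \<Rightarrow>\<^sub>0 'k"

definition xmon :: "('v \<Rightarrow>\<^sub>0 nat) \<Rightarrow> ('v,'k::comm_ring_1) mpoly" where
  "xmon a = Poly_Mapping.single a 1"

definition cnst :: "'k::comm_ring_1 \<Rightarrow> ('v,'k) mpoly" where
  "cnst c = Poly_Mapping.single 0 c"

definition var :: "'v \<Rightarrow> ('v,'k::comm_ring_1) mpoly" where
  "var v = xmon (Poly_Mapping.single v 1)"

text \<open>componentwise divisibility of exponent vectors (x^b divides x^a)\<close>
definition mdvd :: "('v \<Rightarrow>\<^sub>0 nat) \<Rightarrow> ('v \<Rightarrow>\<^sub>0 nat) \<Rightarrow> bool" where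
  "mdvd b a \<longleftrightarrow> (\<forall>v. Poly_Mapping.lookup b v \<le> Poly_Mapping.lookup a v)"

text \<open>polynomial ring in the variables V (as a subset of all polynomials)\<close>
definition polyring :: "'v set \<Rightarrow> ('v,'k::comm_ring_1) mpoly set" where
  "polyring V = {f. \<forall>a\<in>Poly_Mapping.keys f. Poly_Mapping.keys a \<subseteq> V}"

definition ideal_gen :: "('v,'k::comm_ring_1) mpoly set \<Rightarrow> ('v,'k) mpoly set \<Rightarrow> ('v,'k) mpoly set" where
  "ideal_gen R G = {\<Sum>s<(N::nat). c s * g s | N c g. \<forall>s<N. c s \<in> R \<and> g s \<in> G}"

definition is_ideal :: "('v,'k::comm_ring_1) mpoly set \<Rightarrow> ('v,'k) mpoly set \<Rightarrow> bool" where
  "is_ideal R I \<longleftrightarrow> I \<subseteq> R \<and> 0 \<in> I \<and> (\<forall>f\<in>I. \<forall>g\<in>I. f + g \<in> I)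
      \<and> (\<forall>r\<in>R. \<forall>f\<in>I. r * f \<in> I)"

definition monomial_ideal :: "('v,'k::comm_ring_1) mpoly set \<Rightarrow> ('v,'k) mpoly set \<Rightarrow> bool" where
  "monomial_ideal R I \<longleftrightarrow> is_ideal R I \<and> I = ideal_gen R {u \<in> I. \<exists>a. u = xmon a}"

definition mingens :: "('v,'k::comm_ring_1) mpoly set \<Rightarrow> ('v,'k) mpoly set" where
  "mingens I = {xmon a | a. xmon a \<in> I \<and> \<not> (\<exists>b. xmon b \<in> I \<and> b \<noteq> a \<and> mdvd b a)}"

text \<open>homogeneous of (standard) degree d; the zero polynomial is homogeneous of every degree\<close>
definition homog :: "nat \<Rightarrow> ('v,'k::comm_ring_1) mpoly \<Rightarrow> bool" where
  "homog d f \<longleftrightarrow> (\<forall>a\<in>Poly_Mapping.keys f. (\<Sum>v\<in>Poly_Mapping.keys a. Poly_Mapping.lookup a v) = d)"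

text \<open>column vectors of length b with entries in the set R (modelled as nat-indexed, zero beyond b)\<close>
definition vecs :: "'a::zero set \<Rightarrow> nat \<Rightarrow> (nat \<Rightarrow> 'a) set" where
  "vecs R b = {u. (\<forall>j<b. u j \<in> R) \<and> (\<forall>j\<ge>b. u j = 0)}"

definition mat_app :: "nat \<Rightarrow> nat \<Rightarrow> (nat \<Rightarrow> nat \<Rightarrow> 'a::comm_ring_1) \<Rightarrow> (nat \<Rightarrow> 'a) \<Rightarrow> nat \<Rightarrow> 'a" where
  "mat_app r c M u = (\<lambda>k. if k < r then (\<Sum>j<c. M k j * u j) else 0)"

definition module_gen :: "('v,'k::comm_ring_1) mpoly set \<Rightarrow> (nat \<Rightarrow> ('v,'k) mpoly) set
     \<Rightarrow> (nat \<Rightarrow> ('v,'k) mpoly) set" where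
  "module_gen R G = {(\<lambda>k. \<Sum>s<(N::nat). c s * w s k) | N c w. \<forall>s<N. c s \<in> R \<and> w s \<in> G}"

text \<open>The ideal L of the (standard graded) polynomial ring R = polyring V has a d-linear resolution:
  there is a graded free resolution 0 <- R/L <- R <- R^{b 1} <- R^{b 2} <- ... of R/L whose
  first map is given by generators of L homogeneous of degree d and all further maps by matrices
  of linear forms. (Such a resolution is automatically minimal, so this says precisely that L is
  generated in degree d and its minimal graded free resolution is linear.)\<close>
definition has_linear_resolution :: "'v set \<Rightarrow> ('v,'k::comm_ring_1) mpoly set \<Rightarrow> nat \<Rightarrow> bool" where
  "has_linear_resolution V L d \<longleftrightarrow>
    (\<exists>(b::nat \<Rightarrow> nat) (M::nat \<Rightarrow> nat \<Rightarrow> nat \<Rightarrow> ('v,'k) mpoly).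
       b 0 = 1 \<and> (\<exists>p. \<forall>i>p. b i = 0) \<and>
       (\<forall>i k j. M i k j \<in> polyring V) \<and>
       (\<forall>j. homog d (M 1 0 j)) \<and>
       (\<forall>i\<ge>2. \<forall>k j. homog 1 (M i k j)) \<and>
       (\<lambda>u. mat_app 1 (b 1) (M 1) u 0) ` vecs (polyring V) (b 1) = L \<and>
       (\<forall>i\<ge>1. {u \<in> vecs (polyring V) (b i). mat_app (b (i - 1)) (b i) (M i) u = (\<lambda>_. 0)}
               = mat_app (b i) (b (i + 1)) (M (i + 1)) ` vecs (polyring V) (b (i + 1))))"

text \<open>Matrix of the i-th differential of a Z^n-graded free resolution with basis degrees a,
  scalars lam: entry (k,j) is lam i k j * x^(a i j - a (i-1) k).\<close>
definition res_mat :: "(nat \<Rightarrow> nat \<Rightarrow> ('v \<Rightarrow>\<^sub>0 nat)) \<Rightarrow> (nat \<Rightarrow> nat \<Rightarrow> nat \<Rightarrow> 'k::comm_ring_1)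
     \<Rightarrow> nat \<Rightarrow> nat \<Rightarrow> nat \<Rightarrow> ('v,'k) mpoly" where
  "res_mat a lam i k j = cnst (lam i k j) * xmon (a i j - a (i - 1) k)"

text \<open>(beta, a, lam, p) is a Z^n-graded minimal free resolution of S/I, S = K[x_v | v :: 'v]:
  F_0 = S with basis of degree 0, F_i = S^(beta i) with basis of degrees a i j, differentials
  given by res_mat, exact with cokernel of the first map S/I, of length p, and minimal.\<close>
definition is_min_graded_res ::
  "('v::finite,'k::field) mpoly set \<Rightarrow> (nat \<Rightarrow> nat) \<Rightarrow> (nat \<Rightarrow> nat \<Rightarrow> ('v \<Rightarrow>\<^sub>0 nat))
     \<Rightarrow> (nat \<Rightarrow> nat \<Rightarrow> nat \<Rightarrow> 'k) \<Rightarrow> nat \<Rightarrow> bool" where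
  "is_min_graded_res I beta a lam p \<longleftrightarrow>
     beta 0 = 1 \<and> a 0 0 = 0 \<and> (\<forall>i>p. beta i = 0) \<and>
     (\<forall>i k j. lam i k j \<noteq> 0 \<longrightarrow> mdvd (a (i - 1) k) (a i j)) \<and>
     (\<lambda>u. mat_app 1 (beta 1) (res_mat a lam 1) u 0) ` vecs UNIV (beta 1) = I \<and>
     (\<forall>i\<ge>1. {u \<in> vecs UNIV (beta i). mat_app (beta (i - 1)) (beta i) (res_mat a lam i) u = (\<lambda>_. 0)}
             = mat_app (beta i) (beta (i + 1)) (res_mat a lam (i + 1)) ` vecs UNIV (beta (i + 1))) \<and>
     (\<forall>i\<ge>1. \<forall>k<beta (i - 1). \<forall>j<beta i.
          res_mat a lam i k j \<in> ideal_gen UNIV (range var))"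

text \<open>Variables of T: x_{l r}, l :: 'v, r < mT l.\<close>
definition Tvars :: "('v \<Rightarrow> nat) \<Rightarrow> ('v \<times> nat) set" where
  "Tvars mT = {(l, r). r < mT l}"

definition Tlvars :: "('v \<Rightarrow> nat) \<Rightarrow> 'v \<Rightarrow> ('v \<times> nat) set" where
  "Tlvars mT l = {(l, r) | r. r < mT l}"

text \<open>The ideals L_{ij} of the complex F^*: L_{0 1} = T, L_{1j} = L_j, and for i \<ge> 2
  L_{ij} = intersection of the L_{i-1,k} with lam i k j \<noteq> 0.\<close>
primrec Lstar :: "('w,'k::comm_ring_1) mpoly set \<Rightarrow> (nat \<Rightarrow> ('w,'k) mpoly set) \<Rightarrow> (nat \<Rightarrow> nat)
     \<Rightarrow> (nat \<Rightarrow> nat \<Rightarrow> nat \<Rightarrow> 'k) \<Rightarrow> nat \<Rightarrow> nat \<Rightarrow> ('w,'k) mpoly set" where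
  "Lstar T Lj beta lam 0 j = T"
| "Lstar T Lj beta lam (Suc i) j =
     (if i = 0 then Lj j
      else T \<inter> \<Inter> {Lstar T Lj beta lam i k | k. k < beta i \<and> lam (Suc i) k j \<noteq> 0})"

definition Fstar :: "('w,'k::comm_ring_1) mpoly set \<Rightarrow> (nat \<Rightarrow> ('w,'k) mpoly set) \<Rightarrow> (nat \<Rightarrow> nat)
     \<Rightarrow> (nat \<Rightarrow> nat \<Rightarrow> nat \<Rightarrow> 'k) \<Rightarrow> nat \<Rightarrow> (nat \<Rightarrow> ('w,'k) mpoly) set" where
  "Fstar T Lj beta lam i = {u. (\<forall>j<beta i. u j \<in> Lstar T Lj beta lam i j) \<and> (\<forall>j\<ge>beta i. u j = 0)}"

definition dstar :: "(nat \<Rightarrow> nat) \<Rightarrow> (nat \<Rightarrow> nat \<Rightarrow> nat \<Rightarrow> 'k::comm_ring_1) \<Rightarrow> nat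
     \<Rightarrow> (nat \<Rightarrow> ('w,'k) mpoly) \<Rightarrow> nat \<Rightarrow> ('w,'k) mpoly" where
  "dstar beta lam i u = mat_app (beta (i - 1)) (beta i) (\<lambda>k j. cnst (lam i k j)) u"

end

theory Submission
  imports Defs
begin

text \<open>Exactness and minimality of the resolution show that the multidegree \<open>a\<^sub>i\<^sub>j\<close> is the lcm of
  the degrees \<open>a\<^sub>k\<close> of the generators reached from \<open>f\<^sub>i\<^sub>j\<close> along nonzero scalars, that \<open>L\<^sub>i\<^sub>j\<close> is
  the intersection of the corresponding \<open>L\<^sub>k\<close>, and that \<open>a\<^bsub>i-1,k\<^esub>\<close> is a proper divisor of
  \<open>a\<^sub>i\<^sub>j\<close> whenever \<open>\<lambda>\<^sub>k\<^sub>j \<noteq> 0\<close>. So in some coordinate \<open>l\<close> a generator \<open>k\<^sub>0\<close> below \<open>f\<^sub>i\<^sub>j\<close> has a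
  larger exponent than the generator \<open>k\<^sub>1\<close> with maximal \<open>l\<close>-exponent below \<open>f\<^bsub>i-1,k\<^esub>\<close>.
  A monomial of \<open>L\<^sub>i\<^sub>j\<close> lies in \<open>L\<^bsub>k\<^sub>0\<^esub>\<close>, so its \<open>l\<close>-th block has degree at least \<open>a\<^bsub>k\<^sub>0\<^esub>(l)\<close>
  and lies in \<open>L\<^bsub>l,a\<^sub>k\<^sub>1(l)\<^esub>\<close>, which is generated in the smaller degree \<open>a\<^bsub>k\<^sub>1\<^esub>(l)\<close>. Hence one
  variable can be removed from that block while staying in \<open>L\<^bsub>l,a\<^sub>k\<^sub>1(l)\<^esub>\<close>, and thus in all the
  ideals belonging to \<open>f\<^bsub>i-1,k\<^esub>\<close>: every term of \<open>\<partial>\<^sup>*u\<close> is a variable times an element of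
  \<open>F\<^sup>*\<^bsub>i-1\<^esub>\<close>. For \<open>i = 1\<close> any variable of the monomial will do; one exists as \<open>I \<noteq> S\<close>.\<close>

section \<open>Exponent vectors and monomials\<close>

lemma mdvd_trans: "mdvd a b \<Longrightarrow> mdvd b c \<Longrightarrow> mdvd a c"
  unfolding mdvd_def using le_trans by blast

lemma mdvd_antisym: "mdvd a b \<Longrightarrow> mdvd b a \<Longrightarrow> a = b"
  unfolding mdvd_def by (rule poly_mapping_eqI) (meson antisym)

lemma mdvd_add_left: "mdvd b (a + b)"
  by (simp add: mdvd_def lookup_add)

lemma mdvd_sum_member:
  assumes "finite A" "l \<in> A" "mdvd (\<Sum>l\<in>A. e l) d"
  shows "mdvd (e l) d"
  unfolding mdvd_def
proof
  fix w
  have "Poly_Mapping.lookup (e l) w \<le> Poly_Mapping.lookup (\<Sum>l\<in>A. e l) w"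
    unfolding lookup_sum by (rule member_le_sum) (simp_all add: assms(1,2))
  also have "\<dots> \<le> Poly_Mapping.lookup d w"
    using assms(3) unfolding mdvd_def by blast
  finally show "Poly_Mapping.lookup (e l) w \<le> Poly_Mapping.lookup d w" .
qed

lemma diff_add_mdvd: "mdvd b a \<Longrightarrow> a - b + b = a"
  unfolding mdvd_def by (simp add: poly_mapping_eq_iff fun_eq_iff lookup_add lookup_minus)

lemma keys_diff_subset: "Poly_Mapping.keys ((d::'a \<Rightarrow>\<^sub>0 nat) - e) \<subseteq> Poly_Mapping.keys d"
  by (auto simp: in_keys_iff lookup_minus)

lemma poly_mapping_nat_add_eq_0: "(d::'a \<Rightarrow>\<^sub>0 nat) + e = 0 \<longleftrightarrow> d = 0 \<and> e = 0"
  by (auto simp: poly_mapping_eq_iff lookup_add fun_eq_iff)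

definition total_deg :: "('a \<Rightarrow>\<^sub>0 nat) \<Rightarrow> nat" where
  "total_deg a = (\<Sum>v\<in>Poly_Mapping.keys a. Poly_Mapping.lookup a v)"

lemma total_deg_mono:
  assumes "mdvd t e"
  shows "total_deg t \<le> total_deg e"
proof -
  have sub: "Poly_Mapping.keys t \<subseteq> Poly_Mapping.keys e"
  proof
    fix x
    assume "x \<in> Poly_Mapping.keys t"
    then have "0 < Poly_Mapping.lookup t x" by (simp add: in_keys_iff)
    also have "\<dots> \<le> Poly_Mapping.lookup e x" using assms by (simp add: mdvd_def)
    finally show "x \<in> Poly_Mapping.keys e" by (simp add: in_keys_iff)
  qed
  have "total_deg t = (\<Sum>v\<in>Poly_Mapping.keys e. Poly_Mapping.lookup t v)"
    unfolding total_deg_def by (rule sum.mono_neutral_left) (auto simp: sub in_keys_iff)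
  also have "\<dots> \<le> total_deg e"
    unfolding total_deg_def using assms by (auto simp: mdvd_def intro: sum_mono)
  finally show ?thesis .
qed

lemma xmon_add: "xmon (a + b) = (xmon a * xmon b :: ('v,'k::comm_ring_1) mpoly)"
  by (simp add: xmon_def mult_single)

lemma xmon_zero: "xmon 0 = (1 :: ('v,'k::comm_ring_1) mpoly)"
  by (simp add: xmon_def)

lemma keys_xmon [simp]: "Poly_Mapping.keys (xmon a :: ('v,'k::comm_ring_1) mpoly) = {a}"
  by (simp add: xmon_def)

lemma prod_xmon:
  "finite A \<Longrightarrow> (\<Prod>l\<in>A. xmon (e l)) = (xmon (\<Sum>l\<in>A. e l) :: ('w,'k::comm_ring_1) mpoly)"
  by (induction A rule: finite_induct) (auto simp: xmon_zero xmon_add)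

lemma var_mult_xmon_diff:
  assumes "1 \<le> Poly_Mapping.lookup d v"
  shows "var v * xmon (d - Poly_Mapping.single v 1) = (xmon d :: ('v,'k::comm_ring_1) mpoly)"
proof -
  have "Poly_Mapping.single v 1 + (d - Poly_Mapping.single v 1) = d"
  proof (rule poly_mapping_eqI)
    fix w
    show "Poly_Mapping.lookup (Poly_Mapping.single v 1 + (d - Poly_Mapping.single v 1)) w
        = Poly_Mapping.lookup d w"
      using assms by (cases "w = v") (simp_all add: lookup_add lookup_minus lookup_single)
  qed
  then show ?thesis by (metis var_def xmon_add)
qed

lemma single_eq_cnst_xmon: "Poly_Mapping.single d b = (cnst b * xmon d :: ('v,'k::comm_ring_1) mpoly)"
  by (simp add: cnst_def xmon_def mult_single)

lemma poly_mapping_sum_single: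
  "p = (\<Sum>d\<in>Poly_Mapping.keys p. Poly_Mapping.single d (Poly_Mapping.lookup p d))"
  by (rule poly_mapping_eqI) (auto simp: lookup_sum lookup_single when_def in_keys_iff)

lemma lookup_single_mult_add:
  "Poly_Mapping.lookup (Poly_Mapping.single (c::'v \<Rightarrow>\<^sub>0 nat) (a::'k::comm_ring_1) * p) (c + e)
     = a * Poly_Mapping.lookup p e"
proof -
  have "Poly_Mapping.single c a * p
      = (\<Sum>d\<in>Poly_Mapping.keys p. Poly_Mapping.single (c + d) (a * Poly_Mapping.lookup p d))"
    by (subst poly_mapping_sum_single[of p]) (simp add: sum_distrib_left mult_single)
  then show ?thesis
    by (auto simp: lookup_sum lookup_single when_def in_keys_iff)
qed

lemma xmon_mult_eq_0D: "xmon c * p = 0 \<Longrightarrow> (p :: ('v,'k::comm_ring_1) mpoly) = 0"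
proof (rule poly_mapping_eqI)
  fix e
  assume "xmon c * p = 0"
  then have "Poly_Mapping.lookup (xmon c * p) (c + e) = 0" by simp
  then show "Poly_Mapping.lookup p e = Poly_Mapping.lookup 0 e"
    by (simp add: xmon_def lookup_single_mult_add)
qed

lemma keys_cnst_mult: "Poly_Mapping.keys (cnst c * p :: ('v,'k::comm_ring_1) mpoly) \<subseteq> Poly_Mapping.keys p"
  using keys_mult[of "cnst c" p] by (auto simp: cnst_def split: if_splits)

lemma keys_prod_subset:
  fixes f :: "'l \<Rightarrow> ('w,'k::comm_ring_1) mpoly"
  assumes "finite A"
  shows "Poly_Mapping.keys (\<Prod>l\<in>A. f l) \<subseteq> {\<Sum>l\<in>A. e l | e. \<forall>l\<in>A. e l \<in> Poly_Mapping.keys (f l)}"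
  using assms
proof (induction A rule: finite_induct)
  case empty
  then show ?case by simp
next
  case (insert x A)
  show ?case
  proof
    fix d
    assume "d \<in> Poly_Mapping.keys (\<Prod>l\<in>insert x A. f l)"
    then obtain u v where uv: "u \<in> Poly_Mapping.keys (f x)" "v \<in> Poly_Mapping.keys (\<Prod>l\<in>A. f l)" "d = u + v"
      using insert keys_mult[of "f x" "\<Prod>l\<in>A. f l"] by auto
    from uv(2) insert.IH obtain e where e: "v = (\<Sum>l\<in>A. e l)" "\<forall>l\<in>A. e l \<in> Poly_Mapping.keys (f l)"
      by blast
    have "(\<Sum>l\<in>A. (e(x := u)) l) = (\<Sum>l\<in>A. e l)"
      using insert(2) by (intro sum.cong) auto
    then have "d = (\<Sum>l\<in>insert x A. (e(x := u)) l)"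
      using insert uv e by simp
    moreover have "\<forall>l\<in>insert x A. (e(x := u)) l \<in> Poly_Mapping.keys (f l)"
      using e uv by auto
    ultimately show "d \<in> {\<Sum>l\<in>insert x A. e l | e. \<forall>l\<in>insert x A. e l \<in> Poly_Mapping.keys (f l)}"
      by blast
  qed
qed

lemma lookup_mult_0:
  "Poly_Mapping.lookup ((p::('v \<Rightarrow>\<^sub>0 nat) \<Rightarrow>\<^sub>0 'k::comm_ring_1) * q) 0
     = Poly_Mapping.lookup p 0 * Poly_Mapping.lookup q 0"
proof -
  have "(\<Sum>r. Poly_Mapping.lookup q r when 0 = l + r) = (Poly_Mapping.lookup q 0 when l = 0)"
    for l :: "'v \<Rightarrow>\<^sub>0 nat"
  proof -
    have "(\<lambda>r. Poly_Mapping.lookup q r when 0 = l + r)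
        = (\<lambda>r. (Poly_Mapping.lookup q 0 when l = 0) when r = 0)"
      by (auto simp: fun_eq_iff when_def poly_mapping_nat_add_eq_0 dest: sym)
    then show ?thesis by (simp only:) simp
  qed
  then show ?thesis by (simp add: lookup_mult mult_when)
qed

lemma lookup_xmon_0: "c \<noteq> 0 \<Longrightarrow> Poly_Mapping.lookup (xmon c :: ('v,'k::comm_ring_1) mpoly) 0 = 0"
  by (simp add: xmon_def lookup_single)

lemma lookup_cnst_0 [simp]: "Poly_Mapping.lookup (cnst a :: ('v,'k::comm_ring_1) mpoly) 0 = a"
  by (simp add: cnst_def)

lemma lookup_var_0: "Poly_Mapping.lookup (var v :: ('v,'k::comm_ring_1) mpoly) 0 = 0"
  unfolding var_def by (rule lookup_xmon_0) (metis lookup_single_eq lookup_zero one_neq_zero)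

lemma lookup_0_max_ideal:
  assumes "p \<in> ideal_gen UNIV (range var)"
  shows "Poly_Mapping.lookup (p :: ('v,'k::comm_ring_1) mpoly) 0 = 0"
proof -
  obtain N c g where "p = (\<Sum>s<(N::nat). c s * g s)" "\<forall>s<N. g s \<in> range var"
    using assms by (auto simp: ideal_gen_def)
  then show ?thesis by (auto simp: lookup_sum lookup_mult_0 lookup_var_0 intro!: sum.neutral)
qed

lemma xmon_in_polyring_iff: "xmon t \<in> polyring V \<longleftrightarrow> Poly_Mapping.keys t \<subseteq> V"
  by (simp add: polyring_def)

lemma cnst_in_polyring: "cnst c \<in> polyring V"
  by (simp add: polyring_def cnst_def)

lemma one_in_polyring: "1 \<in> polyring V"
  using xmon_in_polyring_iff[of 0 V] by (simp add: xmon_zero)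

lemma zero_in_polyring: "0 \<in> polyring V"
  by (simp add: polyring_def)

lemma var_in_ideal_gen_var: "v \<in> V \<Longrightarrow> var v \<in> ideal_gen (polyring V) (var ` V)"
  unfolding ideal_gen_def
  by (intro CollectI exI[of _ 1] exI[of _ "\<lambda>_. 1"] exI[of _ "\<lambda>_. var v"]) (auto simp: one_in_polyring)

section \<open>Monomial ideals with a linear resolution\<close>

lemma monomial_ideal_subset: "monomial_ideal R J \<Longrightarrow> J \<subseteq> R"
  by (simp add: monomial_ideal_def is_ideal_def)

lemma keys_xmon_in_monomial_ideal:
  assumes "monomial_ideal (polyring V) J" "xmon e \<in> J"
  shows "Poly_Mapping.keys e \<subseteq> V"
  using assms monomial_ideal_subset by (fastforce simp: xmon_in_polyring_iff)

lemma xmon_dvd_in_monomial_ideal: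
  assumes mon: "monomial_ideal (polyring V) J" and t: "xmon t \<in> J"
    and dvd: "mdvd t e" and keys: "Poly_Mapping.keys e \<subseteq> V"
  shows "xmon e \<in> J"
proof -
  have "xmon (e - t) \<in> polyring V"
    using keys keys_diff_subset[of e t] by (simp add: xmon_in_polyring_iff)
  moreover have "is_ideal (polyring V) J"
    using mon by (simp add: monomial_ideal_def)
  ultimately have "xmon (e - t) * xmon t \<in> J"
    using t unfolding is_ideal_def by blast
  then show ?thesis by (simp add: diff_add_mdvd[OF dvd] flip: xmon_add)
qed

lemma monomial_ideal_keys:
  assumes mon: "monomial_ideal (polyring V) J" and f: "f \<in> J" and d: "d \<in> Poly_Mapping.keys f"
  shows "xmon d \<in> J"
proof -
  have "f \<in> ideal_gen (polyring V) {u \<in> J. \<exists>a. u = xmon a}"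
    using mon f by (simp add: monomial_ideal_def)
  then obtain N c g where f_eq: "f = (\<Sum>s<(N::nat). c s * g s)"
    and cg: "\<forall>s<N. c s \<in> polyring V \<and> g s \<in> {u \<in> J. \<exists>a. u = xmon a}"
    by (auto simp: ideal_gen_def)
  obtain s where s: "s < N" "d \<in> Poly_Mapping.keys (c s * g s)"
    using d f_eq keys_sum[of "\<lambda>s. c s * g s" "{..<N}"] by blast
  obtain e where e: "g s = xmon e" "xmon e \<in> J"
    using cg s by auto
  obtain t where t: "t \<in> Poly_Mapping.keys (c s)" "d = t + e"
    using s(2) keys_mult[of "c s" "g s"] by (auto simp: e(1))
  have "Poly_Mapping.keys t \<subseteq> V"
    using cg s t(1) by (auto simp: polyring_def)
  moreover have "Poly_Mapping.keys e \<subseteq> V"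
    using keys_xmon_in_monomial_ideal[OF mon e(2)] .
  ultimately have "Poly_Mapping.keys d \<subseteq> V"
    using t(2) keys_add[of t e] by blast
  then show ?thesis
    using xmon_dvd_in_monomial_ideal[OF mon e(2)] t(2) mdvd_add_left by blast
qed

lemma linear_resolution_gen_dvd:
  fixes J :: "('v,'k::comm_ring_1) mpoly set"
  assumes lin: "has_linear_resolution V J d" and mon: "monomial_ideal (polyring V) J"
    and e: "xmon e \<in> J"
  shows "\<exists>t. mdvd t e \<and> total_deg t = d \<and> xmon t \<in> J"
proof -
  obtain b :: "nat \<Rightarrow> nat" and M :: "nat \<Rightarrow> nat \<Rightarrow> nat \<Rightarrow> ('v,'k) mpoly" where
    hom: "\<forall>j. homog d (M 1 0 j)" and
    img: "(\<lambda>u. mat_app 1 (b 1) (M 1) u 0) ` vecs (polyring V) (b 1) = J"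
    using lin unfolding has_linear_resolution_def by (elim exE conjE) simp
  have "xmon e \<in> (\<lambda>u. mat_app 1 (b 1) (M 1) u 0) ` vecs (polyring V) (b 1)"
    using e by (simp only: img)
  then obtain u where u: "u \<in> vecs (polyring V) (b 1)" "xmon e = mat_app 1 (b 1) (M 1) u 0"
    by (rule imageE) simp
  have "e \<in> Poly_Mapping.keys (xmon e :: ('v,'k) mpoly)"
    by simp
  then have "e \<in> Poly_Mapping.keys (\<Sum>j<b 1. M 1 0 j * u j)"
    by (simp only: u(2)) (simp add: mat_app_def)
  then obtain j where j: "j < b 1" "e \<in> Poly_Mapping.keys (M 1 0 j * u j)"
    using keys_sum[of "\<lambda>j. M 1 0 j * u j" "{..<b 1}"] by blast
  obtain t s where ts: "t \<in> Poly_Mapping.keys (M 1 0 j)" "e = t + s"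
    using j(2) keys_mult[of "M 1 0 j" "u j"] by blast
  let ?unit = "\<lambda>k. if k = j then (1::('v,'k) mpoly) else 0"
  have "?unit \<in> vecs (polyring V) (b 1)"
    using j by (auto simp: vecs_def one_in_polyring zero_in_polyring)
  then have "mat_app 1 (b 1) (M 1) ?unit 0 \<in> J"
    unfolding img[symmetric] by (rule imageI)
  moreover have "mat_app 1 (b 1) (M 1) ?unit 0 = M 1 0 j"
  proof -
    have "M 1 0 k * ?unit k = (if k = j then M 1 0 k else 0)" for k
      by simp
    then show ?thesis using j by (simp add: mat_app_def)
  qed
  ultimately have "M 1 0 j \<in> J"
    by simp
  then have "xmon t \<in> J"
    using monomial_ideal_keys[OF mon] ts(1) by blast
  moreover have "total_deg t = d"
    using hom ts(1) by (auto simp: homog_def total_deg_def)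
  moreover have "mdvd t e"
    using ts(2) by (simp add: mdvd_def lookup_add)
  ultimately show ?thesis by blast
qed

lemma linear_resolution_deg_le:
  assumes "has_linear_resolution V J d" "monomial_ideal (polyring V) J" "xmon e \<in> J"
  shows "d \<le> total_deg e"
  using linear_resolution_gen_dvd[OF assms] total_deg_mono by blast

text \<open>Such a monomial is a proper multiple of a generator of degree \<open>d\<close>.\<close>
lemma linear_resolution_drop_var:
  assumes lin: "has_linear_resolution V J d" and mon: "monomial_ideal (polyring V) J"
    and e: "xmon e \<in> J" and deg: "d < total_deg e"
  shows "\<exists>v\<in>Poly_Mapping.keys e. xmon (e - Poly_Mapping.single v 1) \<in> J"
proof -
  obtain t where t: "mdvd t e" "total_deg t = d" "xmon t \<in> J"
    using linear_resolution_gen_dvd[OF lin mon e] by blast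
  have "t \<noteq> e"
    using t(2) deg by auto
  then have "\<not> mdvd e t"
    using mdvd_antisym[OF t(1)] by blast
  then obtain v where v: "Poly_Mapping.lookup t v < Poly_Mapping.lookup e v"
    unfolding mdvd_def by (meson not_le)
  have "Poly_Mapping.lookup t w \<le> Poly_Mapping.lookup e w - (1 when v = w)" for w
  proof (cases "w = v")
    case True
    then show ?thesis using v by simp
  next
    case False
    then show ?thesis using t(1) by (simp add: mdvd_def)
  qed
  then have "mdvd t (e - Poly_Mapping.single v 1)"
    by (simp add: mdvd_def lookup_minus lookup_single)
  moreover have "Poly_Mapping.keys (e - Poly_Mapping.single v 1) \<subseteq> V"
    using keys_xmon_in_monomial_ideal[OF mon e] keys_diff_subset[of e "Poly_Mapping.single v 1"]
    by (rule order_trans[rotated])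
  ultimately have "xmon (e - Poly_Mapping.single v 1) \<in> J"
    by (rule xmon_dvd_in_monomial_ideal[OF mon t(3)])
  moreover have "v \<in> Poly_Mapping.keys e"
    using v by (simp add: in_keys_iff)
  ultimately show ?thesis by blast
qed

lemma module_gen_zero: "(\<lambda>_. 0) \<in> module_gen R G"
  unfolding module_gen_def by (intro CollectI exI[of _ 0]) simp

lemma sum_lessThan_add_split:
  "(\<Sum>s<(N1 + N2::nat). f s) = (\<Sum>s<N1. f s) + (\<Sum>s<N2. f (s + N1))"
proof -
  have "(\<Sum>s<N1 + N2. f s) = (\<Sum>s\<in>{0..<N1}. f s) + (\<Sum>s\<in>{N1..<N1 + N2}. f s)"
    using sum.atLeastLessThan_concat[of 0 N1 "N1 + N2" f] by (simp add: atLeast0LessThan)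
  also have "(\<Sum>s\<in>{N1..<N1 + N2}. f s) = (\<Sum>s\<in>{0..<N2}. f (s + N1))"
    using sum.shift_bounds_nat_ivl[of f 0 N1 N2] by (simp add: add.commute)
  finally show ?thesis by (simp add: atLeast0LessThan)
qed

lemma module_gen_add:
  assumes x: "x \<in> module_gen R G" and y: "y \<in> module_gen R G"
  shows "(\<lambda>k. x k + y k) \<in> module_gen R G"
proof -
  obtain N1 c1 w1 where 1: "x = (\<lambda>k. \<Sum>s<(N1::nat). c1 s * w1 s k)" "\<forall>s<N1. c1 s \<in> R \<and> w1 s \<in> G"
    using x unfolding module_gen_def by blast
  obtain N2 c2 w2 where 2: "y = (\<lambda>k. \<Sum>s<(N2::nat). c2 s * w2 s k)" "\<forall>s<N2. c2 s \<in> R \<and> w2 s \<in> G"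
    using y unfolding module_gen_def by blast
  define c where "c = (\<lambda>s. if s < N1 then c1 s else c2 (s - N1))"
  define w where "w = (\<lambda>s. if s < N1 then w1 s else w2 (s - N1))"
  have "(\<lambda>k. x k + y k) = (\<lambda>k. \<Sum>s<N1 + N2. c s * w s k)"
    unfolding sum_lessThan_add_split 1 2 by (simp add: c_def w_def)
  moreover have "\<forall>s<N1 + N2. c s \<in> R \<and> w s \<in> G"
    using 1(2) 2(2) by (auto simp: c_def w_def)
  ultimately show ?thesis unfolding module_gen_def by blast
qed

lemma module_gen_sum:
  assumes "finite A" "\<And>a. a \<in> A \<Longrightarrow> f a \<in> module_gen R G"
  shows "(\<lambda>k. \<Sum>a\<in>A. f a k) \<in> module_gen R G"
  using assms
proof (induction A rule: finite_induct)
  case empty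
  then show ?case by (simp add: module_gen_zero)
next
  case (insert x A)
  have "(\<lambda>k. f x k + (\<Sum>a\<in>A. f a k)) \<in> module_gen R G"
    using insert by (intro module_gen_add) auto
  then show ?case using insert by simp
qed

lemma module_gen_scaled_gen:
  assumes "c \<in> R" "w \<in> G"
  shows "(\<lambda>k. c * w k) \<in> module_gen R G"
  unfolding module_gen_def
  by (intro CollectI exI[of _ 1] exI[of _ "\<lambda>_. c"] exI[of _ "\<lambda>_. w"]) (use assms in simp)

lemma vector_monomial_expansion:
  fixes w :: "nat \<Rightarrow> ('v,'k::comm_ring_1) mpoly"
  assumes "\<forall>k\<ge>r. w k = 0"
  shows "w = (\<lambda>k'. \<Sum>k<r. \<Sum>d\<in>Poly_Mapping.keys (w k).
                   cnst (Poly_Mapping.lookup (w k) d) * (if k' = k then xmon d else 0))"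
proof
  fix k'
  have "(\<Sum>d\<in>Poly_Mapping.keys (w k). cnst (Poly_Mapping.lookup (w k) d) * (if k' = k then xmon d else 0))
      = (if k' = k then w k else 0)" for k
    by (subst (3) poly_mapping_sum_single) (simp add: single_eq_cnst_xmon)
  then show "w k' = (\<Sum>k<r. \<Sum>d\<in>Poly_Mapping.keys (w k).
                   cnst (Poly_Mapping.lookup (w k) d) * (if k' = k then xmon d else 0))"
    using assms by (simp add: not_less)
qed

lemma mat_app_diff: "mat_app r c M (\<lambda>k. u k - v k) = (\<lambda>k. mat_app r c M u k - mat_app r c M v k)"
  by (simp add: mat_app_def fun_eq_iff right_diff_distrib sum_subtractf)

lemma mat_app_scale: "mat_app r c M (\<lambda>k. s * u k) = (\<lambda>k. s * mat_app r c M u k)"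
  by (simp add: mat_app_def fun_eq_iff sum_distrib_left mult.left_commute)

lemma mat_app_unit:
  assumes "j < c"
  shows "mat_app r c M (\<lambda>k. if k = j then 1 else 0) = (\<lambda>k. if k < r then M k j else 0)"
proof -
  have "M k l * (if l = j then 1 else 0) = (if l = j then M k l else 0)" for k l
    by simp
  then show ?thesis using assms by (simp add: mat_app_def fun_eq_iff)
qed

lemma unit_in_vecs: "j < b \<Longrightarrow> (\<lambda>k. if k = j then 1 else 0) \<in> vecs UNIV b"
  by (simp add: vecs_def)

section \<open>Minimal graded free resolutions\<close>

locale min_graded_res =
  fixes I :: "('v::finite, 'k::field) mpoly set"
    and beta :: "nat \<Rightarrow> nat" and a :: "nat \<Rightarrow> nat \<Rightarrow> ('v \<Rightarrow>\<^sub>0 nat)"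
    and lam :: "nat \<Rightarrow> nat \<Rightarrow> nat \<Rightarrow> 'k" and p :: nat
  assumes res: "is_min_graded_res I beta a lam p"
begin

abbreviation "D \<equiv> res_mat a lam"

lemma exact:
  "i \<ge> 1 \<Longrightarrow> {u \<in> vecs UNIV (beta i). mat_app (beta (i - 1)) (beta i) (D i) u = (\<lambda>_. 0)}
      = mat_app (beta i) (beta (i + 1)) (D (i + 1)) ` vecs UNIV (beta (i + 1))"
  using res by (simp add: is_min_graded_res_def)

lemma entry_in_max_ideal:
  "i \<ge> 1 \<Longrightarrow> k < beta (i - 1) \<Longrightarrow> j < beta i \<Longrightarrow> D i k j \<in> ideal_gen UNIV (range var)"
  using res by (simp add: is_min_graded_res_def)

lemma lam_nonzero_mdvd: "lam i k j \<noteq> 0 \<Longrightarrow> mdvd (a (i - 1) k) (a i j)"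
  using res by (simp add: is_min_graded_res_def)

lemma lam_nonzero_degree_neq:
  assumes "i \<ge> 1" "k < beta (i - 1)" "j < beta i" "lam i k j \<noteq> 0"
  shows "a (i - 1) k \<noteq> a i j"
proof
  assume eq: "a (i - 1) k = a i j"
  then have "D i k j = cnst (lam i k j)"
    by (simp add: res_mat_def xmon_zero)
  moreover have "Poly_Mapping.lookup (D i k j) 0 = 0"
    using entry_in_max_ideal[OF assms(1-3)] by (rule lookup_0_max_ideal)
  ultimately show False using assms(4) by simp
qed

lemma boundary_of_boundary:
  assumes i: "i \<ge> 2" and y: "y \<in> vecs UNIV (beta i)"
  shows "mat_app (beta (i - 2)) (beta (i - 1)) (D (i - 1)) (mat_app (beta (i - 1)) (beta i) (D i) y)
       = (\<lambda>_. 0)"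
proof -
  have i1: "1 \<le> i - 1" and ii: "i - 1 + 1 = i" "i - 1 - 1 = i - 2"
    using i by auto
  have "mat_app (beta (i - 1)) (beta i) (D i) y \<in> mat_app (beta (i - 1)) (beta i) (D i) ` vecs UNIV (beta i)"
    using y by (rule imageI)
  then have "mat_app (beta (i - 1)) (beta i) (D i) y
      \<in> {u \<in> vecs UNIV (beta (i - 1)). mat_app (beta (i - 2)) (beta (i - 1)) (D (i - 1)) u = (\<lambda>_. 0)}"
    using exact[OF i1] unfolding ii by simp
  then show ?thesis by simp
qed

text \<open>Exactness makes the cycle \<open>e\<^sub>j - y\<close> a boundary, and by minimality boundaries have no
  constant terms.\<close>
lemma unit_minus_cycle_const_coeff:
  assumes i: "i \<ge> 1" and j: "j < beta i" and y: "y \<in> vecs UNIV (beta i)"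
    and cycle: "mat_app (beta (i - 1)) (beta i) (D i) (\<lambda>k. (if k = j then 1 else 0) - y k) = (\<lambda>_. 0)"
  shows "Poly_Mapping.lookup (y j) 0 = 1"
proof -
  have "(\<lambda>k. (if k = j then 1 else 0) - y k) \<in> vecs UNIV (beta i)"
    using y j by (auto simp: vecs_def)
  then have "(\<lambda>k. (if k = j then 1 else 0) - y k)
      \<in> mat_app (beta i) (beta (i + 1)) (D (i + 1)) ` vecs UNIV (beta (i + 1))"
    using cycle unfolding exact[OF i, symmetric] by blast
  then obtain w where w: "(\<lambda>k. (if k = j then 1 else 0) - y k) = mat_app (beta i) (beta (i + 1)) (D (i + 1)) w"
    by blast
  then have "1 - y j = (\<Sum>s<beta (i + 1). D (i + 1) j s * w s)"
    using fun_cong[OF w, of j] j by (simp add: mat_app_def)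
  then have "Poly_Mapping.lookup (1 - y j) 0
      = (\<Sum>s<beta (i + 1). Poly_Mapping.lookup (D (i + 1) j s) 0 * Poly_Mapping.lookup (w s) 0)"
    by (simp add: lookup_sum lookup_mult_0)
  also have "\<dots> = 0"
    by (rule sum.neutral) (use j in \<open>auto intro!: lookup_0_max_ideal entry_in_max_ideal\<close>)
  finally show ?thesis by (simp add: lookup_minus)
qed

lemma ex_lam_nonzero:
  assumes i: "i \<ge> 1" and j: "j < beta i"
  shows "\<exists>k<beta (i - 1). lam i k j \<noteq> 0"
proof (rule ccontr)
  assume "\<not> ?thesis"
  then have "mat_app (beta (i - 1)) (beta i) (D i) (\<lambda>k. (if k = j then 1 else 0) - 0) = (\<lambda>_. 0)"
    using j by (simp add: mat_app_unit fun_eq_iff res_mat_def cnst_def)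
  from unit_minus_cycle_const_coeff[OF i j _ this] show False
    by (simp add: vecs_def)
qed

text \<open>Otherwise \<open>z = \<partial>\<^sub>i w\<close> by exactness, and \<open>e\<^sub>j - x\<^sup>c w\<close> would be a cycle with
  constant coefficient \<open>0\<close> at \<open>j\<close>.\<close>
lemma boundary_of_unit_not_monomial_multiple:
  assumes i: "i \<ge> 2" and j: "j < beta i" and z: "z \<in> vecs UNIV (beta (i - 1))"
    and dunit: "mat_app (beta (i - 1)) (beta i) (D i) (\<lambda>k. if k = j then 1 else 0) = (\<lambda>k. xmon c * z k)"
  shows "c = 0"
proof (rule ccontr)
  assume c0: "c \<noteq> 0"
  have "mat_app (beta (i - 2)) (beta (i - 1)) (D (i - 1)) (\<lambda>k. xmon c * z k) = (\<lambda>_. 0)"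
    using boundary_of_boundary[OF i unit_in_vecs[OF j]] unfolding dunit .
  then have "xmon c * mat_app (beta (i - 2)) (beta (i - 1)) (D (i - 1)) z k = 0" for k
    by (simp add: mat_app_scale fun_eq_iff)
  then have "mat_app (beta (i - 2)) (beta (i - 1)) (D (i - 1)) z = (\<lambda>_. 0)"
    using xmon_mult_eq_0D by blast
  moreover have "i - 1 - 1 = i - 2" and i1: "1 \<le> i - 1" and ii: "i - 1 + 1 = i"
    using i by auto
  ultimately have "z \<in> {u \<in> vecs UNIV (beta (i - 1)). mat_app (beta (i - 1 - 1)) (beta (i - 1)) (D (i - 1)) u = (\<lambda>_. 0)}"
    using z by simp
  then have "z \<in> mat_app (beta (i - 1)) (beta i) (D i) ` vecs UNIV (beta i)"
    using exact[OF i1] unfolding ii by blast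
  then obtain w where w: "w \<in> vecs UNIV (beta i)" "z = mat_app (beta (i - 1)) (beta i) (D i) w"
    by blast
  define y where "y = (\<lambda>k. xmon c * w k)"
  have "y \<in> vecs UNIV (beta i)"
    using w(1) by (simp add: y_def vecs_def)
  moreover have "mat_app (beta (i - 1)) (beta i) (D i) (\<lambda>k. (if k = j then 1 else 0) - y k) = (\<lambda>_. 0)"
    unfolding mat_app_diff y_def mat_app_scale dunit w(2)[symmetric] by simp
  ultimately have "Poly_Mapping.lookup (y j) 0 = 1"
    using unit_minus_cycle_const_coeff[OF _ j] i by simp
  then show False
    by (simp add: y_def lookup_mult_0 lookup_xmon_0[OF c0])
qed

lemma basis_degree_least:
  assumes i: "i \<ge> 2" and j: "j < beta i" and b: "mdvd b (a i j)"
    and common: "\<forall>k<beta (i - 1). lam i k j \<noteq> 0 \<longrightarrow> mdvd (a (i - 1) k) b"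
  shows "b = a i j"
proof -
  define z where "z = (\<lambda>k. if k < beta (i - 1) then cnst (lam i k j) * xmon (b - a (i - 1) k)
                        else (0::('v,'k) mpoly))"
  have "mat_app (beta (i - 1)) (beta i) (D i) (\<lambda>k. if k = j then 1 else 0) = (\<lambda>k. xmon (a i j - b) * z k)"
  proof
    fix k
    show "mat_app (beta (i - 1)) (beta i) (D i) (\<lambda>k. if k = j then 1 else 0) k = xmon (a i j - b) * z k"
    proof (cases "k < beta (i - 1) \<and> lam i k j \<noteq> 0")
      case True
      then have "a i j - a (i - 1) k = (a i j - b) + (b - a (i - 1) k)"
        using common b by (auto simp: mdvd_def poly_mapping_eq_iff fun_eq_iff lookup_minus lookup_add)
      then show ?thesis using True j
        by (simp add: mat_app_unit z_def res_mat_def xmon_add mult.left_commute)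
    next
      case False
      then show ?thesis using j by (auto simp: mat_app_unit z_def res_mat_def cnst_def)
    qed
  qed
  moreover have "z \<in> vecs UNIV (beta (i - 1))"
    by (simp add: z_def vecs_def)
  ultimately have "a i j - b = 0"
    using boundary_of_unit_not_monomial_multiple[OF i j] by blast
  then show ?thesis
    using b diff_add_mdvd[OF b] by simp
qed

lemma basis_degree_dvd:
  assumes i: "i \<ge> 2" and j: "j < beta i"
    and common: "\<forall>k<beta (i - 1). lam i k j \<noteq> 0 \<longrightarrow> mdvd (a (i - 1) k) b"
  shows "mdvd (a i j) b"
proof -
  define g where "g = a i j - (a i j - b)"
  have lookup_g: "Poly_Mapping.lookup g v = min (Poly_Mapping.lookup (a i j) v) (Poly_Mapping.lookup b v)" for v
    by (simp add: g_def lookup_minus)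
  have "\<forall>k<beta (i - 1). lam i k j \<noteq> 0 \<longrightarrow> mdvd (a (i - 1) k) g"
    using common lam_nonzero_mdvd by (auto simp: mdvd_def lookup_g)
  then have "g = a i j"
    by (intro basis_degree_least[OF i j]) (auto simp: mdvd_def lookup_g)
  then show ?thesis
    by (metis lookup_g mdvd_def min.bounded_iff order_refl)
qed

end

text \<open>The indices \<open>k\<close> of the generators \<open>x\<^bsup>a\<^sub>k\<^esup>\<close> of \<open>I\<close> reached from the basis element \<open>f\<^sub>i\<^sub>j\<close>
  along nonzero scalars of the differentials.\<close>
primrec gen_support :: "(nat \<Rightarrow> nat) \<Rightarrow> (nat \<Rightarrow> nat \<Rightarrow> nat \<Rightarrow> 'k::zero) \<Rightarrow> nat \<Rightarrow> nat \<Rightarrow> nat set" where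
  "gen_support beta lam 0 j = {}"
| "gen_support beta lam (Suc i) j =
     (if i = 0 then {j}
      else \<Union>{gen_support beta lam i k | k. k < beta i \<and> lam (Suc i) k j \<noteq> 0})"

lemma Lstar_subset_gen_support:
  "i \<ge> 1 \<Longrightarrow> x \<in> Lstar T Lj beta lam i j \<Longrightarrow> k \<in> gen_support beta lam i j \<Longrightarrow> x \<in> Lj k"
proof (induction i arbitrary: j)
  case (Suc i)
  then show ?case by (cases "i = 0") auto
qed simp

lemma in_Lstar_if_gen_support:
  "i \<ge> 1 \<Longrightarrow> x \<in> T \<Longrightarrow> \<forall>k\<in>gen_support beta lam i j. x \<in> Lj k \<Longrightarrow> x \<in> Lstar T Lj beta lam i j"
proof (induction i arbitrary: j)
  case (Suc i)
  then show ?case by (cases "i = 0") auto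
qed simp

lemma zero_in_Lstar: "\<forall>k. 0 \<in> Lj k \<Longrightarrow> 0 \<in> T \<Longrightarrow> 0 \<in> Lstar T Lj beta lam i j"
  by (induction i arbitrary: j) auto

locale min_graded_res_gens = min_graded_res I beta a lam p
  for I :: "('v::finite, 'k::field) mpoly set" and beta a lam p +
  fixes m :: nat and aj :: "nat \<Rightarrow> ('v \<Rightarrow>\<^sub>0 nat)"
  assumes beta1: "beta 1 = m" and a1: "\<forall>j<m. a 1 j = aj j"
begin

abbreviation "S \<equiv> gen_support beta lam"

lemma gen_support_lcm:
  "i \<ge> 1 \<Longrightarrow> j < beta i \<Longrightarrow>
     S i j \<noteq> {} \<and> S i j \<subseteq> {..<m} \<and> (\<forall>k\<in>S i j. mdvd (aj k) (a i j))
     \<and> (\<forall>b. (\<forall>k\<in>S i j. mdvd (aj k) b) \<longrightarrow> mdvd (a i j) b)"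
proof (induction i arbitrary: j)
  case 0
  then show ?case by simp
next
  case (Suc i)
  show ?case
  proof (cases "i = 0")
    case True
    then show ?thesis using Suc.prems beta1 a1 by (auto simp: mdvd_def)
  next
    case False
    let ?K = "{k. k < beta i \<and> lam (Suc i) k j \<noteq> 0}"
    have S_Suc: "S (Suc i) j = (\<Union>k\<in>?K. S i k)"
      using False by auto
    have IH_ne: "S i k \<noteq> {}" and IH_sub: "S i k \<subseteq> {..<m}"
      and IH_dvd: "\<forall>k'\<in>S i k. mdvd (aj k') (a i k)"
      and IH_lcm: "\<And>b. \<forall>k'\<in>S i k. mdvd (aj k') b \<Longrightarrow> mdvd (a i k) b"
      if "k \<in> ?K" for k
      using Suc.IH[of k] that False by simp_all
    have dvd: "mdvd (a i k) (a (Suc i) j)" if "k \<in> ?K" for k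
      using lam_nonzero_mdvd[of "Suc i" k j] that by simp
    obtain k0 where k0: "k0 \<in> ?K"
      using ex_lam_nonzero[of "Suc i" j] Suc.prems by auto
    have "S (Suc i) j \<noteq> {}"
      using S_Suc IH_ne[OF k0] k0 by auto
    moreover have "S (Suc i) j \<subseteq> {..<m}"
      unfolding S_Suc using IH_sub by (meson UN_least)
    moreover have "mdvd (aj k') (a (Suc i) j)" if k': "k' \<in> S (Suc i) j" for k'
    proof -
      obtain k where k: "k \<in> ?K" "k' \<in> S i k"
        using k' unfolding S_Suc by blast
      have "mdvd (aj k') (a i k)"
        using IH_dvd[OF k(1)] k(2) by blast
      then show ?thesis
        using dvd[OF k(1)] by (rule mdvd_trans)
    qed
    moreover have "mdvd (a (Suc i) j) b" if common: "\<forall>k'\<in>S (Suc i) j. mdvd (aj k') b" for b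
    proof (rule basis_degree_dvd)
      have "mdvd (a i k) b" if "k \<in> ?K" for k
      proof (rule IH_lcm[OF that])
        show "\<forall>k'\<in>S i k. mdvd (aj k') b"
          using common that unfolding S_Suc by blast
      qed
      then show "\<forall>k<beta (Suc i - 1). lam (Suc i) k j \<noteq> 0 \<longrightarrow> mdvd (a (Suc i - 1) k) b"
        by simp
    qed (use False Suc.prems in auto)
    ultimately show ?thesis by blast
  qed
qed

lemma gen_support_attains_max:
  assumes "i \<ge> 1" "j < beta i"
  shows "\<exists>k\<in>S i j. Poly_Mapping.lookup (a i j) l = Poly_Mapping.lookup (aj k) l"
proof -
  have S: "S i j \<noteq> {}" "S i j \<subseteq> {..<m}" "\<forall>k\<in>S i j. mdvd (aj k) (a i j)"
    "\<forall>b. (\<forall>k\<in>S i j. mdvd (aj k) b) \<longrightarrow> mdvd (a i j) b"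
    using gen_support_lcm[OF assms] by auto
  have fin: "finite (S i j)"
    using S(2) finite_subset by blast
  define M where "M = Max ((\<lambda>k. Poly_Mapping.lookup (aj k) l) ` S i j)"
  have "M \<in> (\<lambda>k. Poly_Mapping.lookup (aj k) l) ` S i j"
    unfolding M_def using fin S(1) by (intro Max_in) auto
  then obtain k0 where k0: "k0 \<in> S i j" "M = Poly_Mapping.lookup (aj k0) l"
    by blast
  define b where "b = a i j - Poly_Mapping.single l (Poly_Mapping.lookup (a i j) l - M)"
  have lookup_b: "Poly_Mapping.lookup b v
      = (if v = l then min (Poly_Mapping.lookup (a i j) l) M else Poly_Mapping.lookup (a i j) v)" for v
    by (simp add: b_def lookup_minus lookup_single when_def min_def)
  have "Poly_Mapping.lookup (aj k) l \<le> M" if "k \<in> S i j" for k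
    unfolding M_def using fin that by auto
  then have "\<forall>k\<in>S i j. mdvd (aj k) b"
    using S(3) by (auto simp: mdvd_def lookup_b)
  then have "mdvd (a i j) b"
    using S(4) by blast
  then have "Poly_Mapping.lookup (a i j) l \<le> Poly_Mapping.lookup b l"
    unfolding mdvd_def by blast
  then have "Poly_Mapping.lookup (a i j) l \<le> M"
    by (simp add: lookup_b)
  moreover have "M \<le> Poly_Mapping.lookup (a i j) l"
    using k0 S(3) by (auto simp: mdvd_def)
  ultimately show ?thesis using k0 by (metis le_antisym)
qed

lemma gen_support_strict_coordinate:
  assumes i: "i \<ge> 1" and j: "j < beta (Suc i)" and k: "k < beta i" and lk: "lam (Suc i) k j \<noteq> 0"
  shows "\<exists>l k0 k1. k0 \<in> S (Suc i) j \<and> k1 \<in> S i k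
    \<and> Poly_Mapping.lookup (aj k1) l < Poly_Mapping.lookup (aj k0) l
    \<and> (\<forall>k'\<in>S i k. Poly_Mapping.lookup (aj k') l \<le> Poly_Mapping.lookup (aj k1) l)"
proof -
  have "mdvd (a i k) (a (Suc i) j)"
    using lam_nonzero_mdvd[OF lk] by simp
  moreover have "a i k \<noteq> a (Suc i) j"
    using lam_nonzero_degree_neq[of "Suc i" k j] k j lk by simp
  ultimately have "\<not> mdvd (a (Suc i) j) (a i k)"
    using mdvd_antisym by blast
  then obtain l where lt: "Poly_Mapping.lookup (a i k) l < Poly_Mapping.lookup (a (Suc i) j) l"
    unfolding mdvd_def by (meson not_le)
  obtain k0 where k0: "k0 \<in> S (Suc i) j" "Poly_Mapping.lookup (a (Suc i) j) l = Poly_Mapping.lookup (aj k0) l"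
    using gen_support_attains_max[of "Suc i" j] j by auto
  obtain k1 where k1: "k1 \<in> S i k" "Poly_Mapping.lookup (a i k) l = Poly_Mapping.lookup (aj k1) l"
    using gen_support_attains_max[OF i k] by blast
  have "\<forall>k'\<in>S i k. mdvd (aj k') (a i k)"
    using gen_support_lcm[OF i k] by blast
  then have "\<forall>k'\<in>S i k. Poly_Mapping.lookup (aj k') l \<le> Poly_Mapping.lookup (a i k) l"
    unfolding mdvd_def by blast
  then have "\<forall>k'\<in>S i k. Poly_Mapping.lookup (aj k') l \<le> Poly_Mapping.lookup (aj k1) l"
    by (simp only: k1(2))
  moreover have "Poly_Mapping.lookup (aj k1) l < Poly_Mapping.lookup (aj k0) l"
    using lt k0(2) k1(2) by simp
  ultimately show ?thesis
    using k0(1) k1(1) by blast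
qed

end
section \<open>Products of ideals in disjoint sets of variables\<close>

lemma Tlvars_subset_Tvars: "Tlvars mT l \<subseteq> Tvars mT"
  by (auto simp: Tlvars_def Tvars_def)

lemma fst_Tlvars: "v \<in> Tlvars mT l \<Longrightarrow> fst v = l"
  by (auto simp: Tlvars_def)

definition prod_ideal :: "('v \<Rightarrow> nat) \<Rightarrow> ('v \<Rightarrow> nat \<Rightarrow> ('v \<times> nat, 'k::comm_ring_1) mpoly set) \<Rightarrow> ('v \<Rightarrow> nat)
    \<Rightarrow> ('v \<times> nat, 'k) mpoly set" where
  "prod_ideal mT LL b = ideal_gen (polyring (Tvars mT)) {\<Prod>l\<in>UNIV. f l | f. \<forall>l. f l \<in> LL l (b l)}"

lemma zero_in_prod_ideal: "0 \<in> prod_ideal mT LL b"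
  unfolding prod_ideal_def ideal_gen_def by (intro CollectI exI[of _ 0]) simp

lemma keys_prod_ideal:
  fixes LL :: "'v::finite \<Rightarrow> nat \<Rightarrow> ('v \<times> nat, 'k::comm_ring_1) mpoly set"
  assumes mon: "\<forall>l. monomial_ideal (polyring (Tlvars mT l)) (LL l (b l))"
    and f: "f \<in> prod_ideal mT LL b" and d: "d \<in> Poly_Mapping.keys f"
  shows "Poly_Mapping.keys d \<subseteq> Tvars mT
    \<and> (\<exists>e. (\<forall>l. xmon (e l) \<in> LL l (b l)) \<and> mdvd (\<Sum>l\<in>UNIV. e l) d)"
proof -
  obtain N c g where f_eq: "f = (\<Sum>s<(N::nat). c s * g s)"
    and cg: "\<forall>s<N. c s \<in> polyring (Tvars mT) \<and> g s \<in> {\<Prod>l\<in>UNIV. f l | f. \<forall>l. f l \<in> LL l (b l)}"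
    using f unfolding prod_ideal_def ideal_gen_def by blast
  obtain s where s: "s < N" "d \<in> Poly_Mapping.keys (c s * g s)"
    using d f_eq keys_sum[of "\<lambda>s. c s * g s" "{..<N}"] by blast
  obtain ff where ff: "g s = (\<Prod>l\<in>UNIV. ff l)" "\<forall>l. ff l \<in> LL l (b l)"
    using cg s by blast
  obtain t u where tu: "t \<in> Poly_Mapping.keys (c s)" "u \<in> Poly_Mapping.keys (g s)" "d = t + u"
    using s(2) keys_mult[of "c s" "g s"] by blast
  have "u \<in> {\<Sum>l\<in>UNIV. e l | e. \<forall>l\<in>UNIV. e l \<in> Poly_Mapping.keys (ff l)}"
    using keys_prod_subset[OF finite_UNIV, of ff] tu(2) unfolding ff(1) by blast
  then obtain e where e: "u = (\<Sum>l\<in>UNIV. e l)" "\<forall>l. e l \<in> Poly_Mapping.keys (ff l)"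
    by blast
  have xe: "xmon (e l) \<in> LL l (b l)" for l
    using monomial_ideal_keys mon ff(2) e(2) by blast
  have "Poly_Mapping.keys (e l) \<subseteq> Tvars mT" for l
    using keys_xmon_in_monomial_ideal[OF spec[OF mon] xe] Tlvars_subset_Tvars by (rule order_trans)
  then have "Poly_Mapping.keys u \<subseteq> Tvars mT"
    using keys_sum[of e UNIV] unfolding e(1) by blast
  moreover have "Poly_Mapping.keys t \<subseteq> Tvars mT"
    using cg s tu(1) by (auto simp: polyring_def)
  ultimately have "Poly_Mapping.keys d \<subseteq> Tvars mT"
    using tu(3) keys_add[of t u] by blast
  moreover have "mdvd (\<Sum>l\<in>UNIV. e l) d"
    using tu(3) e(1) by (simp add: mdvd_def lookup_add)
  ultimately show ?thesis
    using xe by blast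
qed

lemma xmon_in_prod_ideal:
  fixes LL :: "'v::finite \<Rightarrow> nat \<Rightarrow> ('v \<times> nat, 'k::comm_ring_1) mpoly set"
  assumes keys: "Poly_Mapping.keys d \<subseteq> Tvars mT" and e: "\<forall>l. xmon (e l) \<in> LL l (b l)"
    and dvd: "mdvd (\<Sum>l\<in>UNIV. e l) d"
  shows "xmon d \<in> prod_ideal mT LL b"
proof -
  define E where "E = (\<Sum>l\<in>UNIV. e l)"
  have "xmon d = (xmon (d - E) :: ('v \<times> nat, 'k) mpoly) * (\<Prod>l\<in>UNIV. xmon (e l))"
    using diff_add_mdvd[OF dvd] by (simp add: prod_xmon E_def flip: xmon_add)
  moreover have "xmon (d - E) \<in> polyring (Tvars mT)"
    using keys keys_diff_subset[of d E] by (simp add: xmon_in_polyring_iff)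
  moreover have "(\<Prod>l\<in>UNIV. xmon (e l)) \<in> {\<Prod>l\<in>UNIV. f l | f. \<forall>l. f l \<in> LL l (b l)}"
    using e by blast
  ultimately show ?thesis
    unfolding prod_ideal_def ideal_gen_def
    by (intro CollectI exI[of _ 1] exI[of _ "\<lambda>_. xmon (d - E)"] exI[of _ "\<lambda>_. \<Prod>l\<in>UNIV. xmon (e l)"]) simp
qed

lemma lookup_sum_blocks:
  assumes "\<forall>l. Poly_Mapping.keys (E l) \<subseteq> Tlvars mT l"
  shows "Poly_Mapping.lookup (\<Sum>l\<in>(UNIV::'v::finite set). E l) w = Poly_Mapping.lookup (E (fst w)) w"
proof -
  have "Poly_Mapping.lookup (E l) w = 0" if "l \<noteq> fst w" for l
    using assms that fst_Tlvars by (metis in_keys_iff subsetD)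
  then have "(\<Sum>l\<in>UNIV. Poly_Mapping.lookup (E l) w)
      = (\<Sum>l\<in>UNIV. if l = fst w then Poly_Mapping.lookup (E l) w else 0)"
    by (intro sum.cong) auto
  then show ?thesis by (simp add: lookup_sum)
qed

text \<open>The factors of a product of monomials live in disjoint sets of variables, so changing the
  monomial inside block \<open>l\<close> only has to respect the ideal \<open>LL l (b l)\<close>.\<close>
lemma xmon_in_prod_ideal_replace_block:
  fixes LL :: "'v::finite \<Rightarrow> nat \<Rightarrow> ('v \<times> nat, 'k::comm_ring_1) mpoly set"
  assumes mon: "\<forall>l. monomial_ideal (polyring (Tlvars mT l)) (LL l (b l))"
    and x: "x \<in> prod_ideal mT LL b" and d: "d \<in> Poly_Mapping.keys x"
    and e': "xmon e' \<in> LL l (b l)" and dvd: "mdvd e' d'"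
    and keys: "Poly_Mapping.keys d' \<subseteq> Tvars mT"
    and outside: "\<forall>w. fst w \<noteq> l \<longrightarrow> Poly_Mapping.lookup d w \<le> Poly_Mapping.lookup d' w"
  shows "xmon d' \<in> prod_ideal mT LL b"
proof -
  obtain e where e: "\<forall>l. xmon (e l) \<in> LL l (b l)" and dvd_d: "mdvd (\<Sum>l\<in>UNIV. e l) d"
    using keys_prod_ideal[OF mon x d] by blast
  have e2: "\<forall>l'. xmon ((e(l := e')) l') \<in> LL l' (b l')"
    using e e' by simp
  then have blocks: "\<forall>l'. Poly_Mapping.keys ((e(l := e')) l') \<subseteq> Tlvars mT l'"
    using mon keys_xmon_in_monomial_ideal by blast
  have "Poly_Mapping.lookup (e (fst w)) w \<le> Poly_Mapping.lookup d' w" if "fst w \<noteq> l" for w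
    using mdvd_sum_member[OF finite_UNIV UNIV_I dvd_d] outside that
    unfolding mdvd_def by (meson order_trans)
  then have "mdvd (\<Sum>l'\<in>UNIV. (e(l := e')) l') d'"
    using dvd unfolding mdvd_def lookup_sum_blocks[OF blocks] by auto
  then show ?thesis
    by (rule xmon_in_prod_ideal[where e="e(l := e')" and LL=LL and b=b, OF keys e2])
qed

section \<open>The complex induced by the resolution\<close>

locale induced_complex = min_graded_res_gens I beta a lam p m aj
  for I :: "('v::finite, 'k::field) mpoly set" and beta a lam p m aj +
  fixes mT :: "'v \<Rightarrow> nat" and LL :: "'v \<Rightarrow> nat \<Rightarrow> ('v \<times> nat, 'k) mpoly set"
  assumes monI: "monomial_ideal UNIV I" and I_proper: "I \<noteq> UNIV"
    and GI: "mingens I = xmon ` aj ` {..<m}"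
    and LLmon: "\<forall>l. \<forall>j<m. monomial_ideal (polyring (Tlvars mT l)) (LL l (Poly_Mapping.lookup (aj j) l))"
    and LLlin: "\<forall>l. \<forall>j<m. has_linear_resolution (Tlvars mT l) (LL l (Poly_Mapping.lookup (aj j) l))
                                (Poly_Mapping.lookup (aj j) l)"
    and LLincl: "\<forall>l. \<forall>j<m. \<forall>k<m. Poly_Mapping.lookup (aj j) l \<ge> Poly_Mapping.lookup (aj k) l
                   \<longrightarrow> LL l (Poly_Mapping.lookup (aj j) l) \<subseteq> LL l (Poly_Mapping.lookup (aj k) l)"
begin

abbreviation T :: "('v \<times> nat, 'k) mpoly set" where
  "T \<equiv> polyring (Tvars mT)"

definition Lj :: "nat \<Rightarrow> ('v \<times> nat, 'k) mpoly set" where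
  "Lj j = prod_ideal mT LL (Poly_Mapping.lookup (aj j))"

lemma LL_monomial:
  "j < m \<Longrightarrow> \<forall>l. monomial_ideal (polyring (Tlvars mT l)) (LL l (Poly_Mapping.lookup (aj j) l))"
  using LLmon by blast

lemma LL_linear:
  "j < m \<Longrightarrow> has_linear_resolution (Tlvars mT l) (LL l (Poly_Mapping.lookup (aj j) l)) (Poly_Mapping.lookup (aj j) l)"
  using LLlin by blast

lemma gen_nonzero:
  assumes j: "j < m"
  shows "aj j \<noteq> 0"
proof
  assume zero: "aj j = 0"
  have "xmon (aj j) \<in> mingens I"
    using GI j by blast
  then have "(1::('v,'k) mpoly) \<in> I"
    unfolding mingens_def by (auto simp: zero xmon_zero)
  moreover have "is_ideal UNIV I"
    using monI by (simp add: monomial_ideal_def)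
  ultimately have "r * 1 \<in> I" for r
    unfolding is_ideal_def by blast
  then show False
    using I_proper by auto
qed

lemma Lj_drop_var:
  assumes j: "j < m" and x: "x \<in> Lj j" and d: "d \<in> Poly_Mapping.keys x"
  shows "\<exists>v\<in>Tvars mT. 1 \<le> Poly_Mapping.lookup d v \<and> xmon (d - Poly_Mapping.single v 1) \<in> T"
proof -
  obtain e where keys_d: "Poly_Mapping.keys d \<subseteq> Tvars mT"
    and e: "\<forall>l. xmon (e l) \<in> LL l (Poly_Mapping.lookup (aj j) l)" and dvd: "mdvd (\<Sum>l\<in>UNIV. e l) d"
    using keys_prod_ideal[OF LL_monomial[OF j] x[unfolded Lj_def] d] by blast
  obtain l where l: "Poly_Mapping.lookup (aj j) l \<noteq> 0"
    using gen_nonzero[OF j] by (metis lookup_zero poly_mapping_eqI)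
  have "Poly_Mapping.lookup (aj j) l \<le> total_deg (e l)"
    using linear_resolution_deg_le[OF LL_linear[OF j] LL_monomial[OF j, rule_format] e[rule_format]] .
  then have "Poly_Mapping.keys (e l) \<noteq> {}"
    using l by (auto simp: total_deg_def)
  then obtain v where v: "v \<in> Poly_Mapping.keys (e l)"
    by blast
  have "Poly_Mapping.keys (e l) \<subseteq> Tlvars mT l"
    using keys_xmon_in_monomial_ideal[OF LL_monomial[OF j, rule_format] e[rule_format]] .
  then have "v \<in> Tvars mT"
    using v Tlvars_subset_Tvars[of mT l] by blast
  moreover have "Poly_Mapping.lookup (e l) v \<le> Poly_Mapping.lookup d v"
    using mdvd_sum_member[OF finite_UNIV UNIV_I dvd] unfolding mdvd_def by blast
  then have "1 \<le> Poly_Mapping.lookup d v"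
    using v by (simp add: in_keys_iff)
  moreover have "xmon (d - Poly_Mapping.single v 1) \<in> T"
    using keys_d keys_diff_subset[of d "Poly_Mapping.single v 1"] by (simp add: xmon_in_polyring_iff)
  ultimately show ?thesis by blast
qed

lemma Lj_block_factor_drop_var:
  assumes k0: "k0 < m" and k1: "k1 < m"
    and lt: "Poly_Mapping.lookup (aj k1) l < Poly_Mapping.lookup (aj k0) l"
    and x: "x \<in> Lj k0" and d: "d \<in> Poly_Mapping.keys x"
  shows "\<exists>v e'. fst v = l \<and> v \<in> Tvars mT \<and> 1 \<le> Poly_Mapping.lookup d v
           \<and> xmon e' \<in> LL l (Poly_Mapping.lookup (aj k1) l) \<and> mdvd e' (d - Poly_Mapping.single v 1)"
proof -
  let ?J1 = "LL l (Poly_Mapping.lookup (aj k1) l)"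
  obtain e where e: "\<forall>l. xmon (e l) \<in> LL l (Poly_Mapping.lookup (aj k0) l)"
    and dvd: "mdvd (\<Sum>l\<in>UNIV. e l) d"
    using keys_prod_ideal[OF LL_monomial[OF k0] x[unfolded Lj_def] d] by blast
  have "LL l (Poly_Mapping.lookup (aj k0) l) \<subseteq> ?J1"
    using LLincl k0 k1 lt by simp
  then have "xmon (e l) \<in> ?J1"
    using e by blast
  moreover have "Poly_Mapping.lookup (aj k1) l < total_deg (e l)"
    using lt linear_resolution_deg_le[OF LL_linear[OF k0] LL_monomial[OF k0, rule_format] e[rule_format]]
    by (rule order_less_le_trans)
  ultimately obtain v where v: "v \<in> Poly_Mapping.keys (e l)"
    and e': "xmon (e l - Poly_Mapping.single v 1) \<in> ?J1"
    using linear_resolution_drop_var[OF LL_linear[OF k1] LL_monomial[OF k1, rule_format]] by blast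
  have "Poly_Mapping.keys (e l) \<subseteq> Tlvars mT l"
    using keys_xmon_in_monomial_ideal[OF LL_monomial[OF k0, rule_format] e[rule_format]] .
  then have "fst v = l" and "v \<in> Tvars mT"
    using v fst_Tlvars[of v mT l] Tlvars_subset_Tvars[of mT l] by blast+
  moreover have e_le_d: "mdvd (e l) d"
    using mdvd_sum_member[OF finite_UNIV UNIV_I dvd] .
  moreover have "1 \<le> Poly_Mapping.lookup d v"
  proof -
    have "Poly_Mapping.lookup (e l) v \<le> Poly_Mapping.lookup d v"
      using e_le_d unfolding mdvd_def by blast
    then show ?thesis
      using v by (simp add: in_keys_iff)
  qed
  moreover have "mdvd (e l - Poly_Mapping.single v 1) (d - Poly_Mapping.single v 1)"
    using e_le_d unfolding mdvd_def by (simp add: lookup_minus diff_le_mono)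
  ultimately show ?thesis
    using e' by blast
qed

lemma Lstar_Suc_drop_var:
  assumes i: "i \<ge> 1" and j: "j < beta (Suc i)" and k: "k < beta i" and lk: "lam (Suc i) k j \<noteq> 0"
    and x: "x \<in> Lstar T Lj beta lam (Suc i) j" and d: "d \<in> Poly_Mapping.keys x"
  shows "\<exists>v\<in>Tvars mT. 1 \<le> Poly_Mapping.lookup d v
           \<and> xmon (d - Poly_Mapping.single v 1) \<in> Lstar T Lj beta lam i k"
proof -
  have keys_d: "Poly_Mapping.keys d \<subseteq> Tvars mT"
    using x i d by (auto simp: polyring_def)
  have x_Lj: "x \<in> Lj k'" if "k' \<in> S (Suc i) j" for k'
    using Lstar_subset_gen_support[OF _ x that] by simp
  have Sj: "S (Suc i) j \<subseteq> {..<m}" and Sk: "S i k \<subseteq> {..<m}"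
    using gen_support_lcm[of "Suc i" j] gen_support_lcm[OF i k] j by auto
  have S_mono: "S i k \<subseteq> S (Suc i) j"
    using i k lk by auto
  obtain l k0 k1 where k0: "k0 \<in> S (Suc i) j" and k1: "k1 \<in> S i k"
    and lt: "Poly_Mapping.lookup (aj k1) l < Poly_Mapping.lookup (aj k0) l"
    and max: "\<forall>k'\<in>S i k. Poly_Mapping.lookup (aj k') l \<le> Poly_Mapping.lookup (aj k1) l"
    using gen_support_strict_coordinate[OF i j k lk] by blast
  have k0m: "k0 < m" and k1m: "k1 < m"
    using k0 k1 Sj Sk by auto
  obtain v e' where fst_v: "fst v = l" and vT: "v \<in> Tvars mT" and dv: "1 \<le> Poly_Mapping.lookup d v"
    and e': "xmon e' \<in> LL l (Poly_Mapping.lookup (aj k1) l)" and dvd: "mdvd e' (d - Poly_Mapping.single v 1)"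
    using Lj_block_factor_drop_var[OF k0m k1m lt x_Lj[OF k0] d] by blast
  have keys_dv: "Poly_Mapping.keys (d - Poly_Mapping.single v 1) \<subseteq> Tvars mT"
    using keys_d keys_diff_subset[of d "Poly_Mapping.single v 1"] by (rule order_trans[rotated])
  have "xmon (d - Poly_Mapping.single v 1) \<in> Lj k'" if k': "k' \<in> S i k" for k'
  proof -
    have k'm: "k' < m"
      using k' Sk by auto
    have x': "x \<in> prod_ideal mT LL (Poly_Mapping.lookup (aj k'))"
      using x_Lj k' S_mono unfolding Lj_def by blast
    have "xmon e' \<in> LL l (Poly_Mapping.lookup (aj k') l)"
      using e' LLincl k1m k'm max k' by blast
    moreover have "\<forall>w. fst w \<noteq> l \<longrightarrow> Poly_Mapping.lookup d w \<le> Poly_Mapping.lookup (d - Poly_Mapping.single v 1) w"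
      using fst_v by (auto simp: lookup_minus lookup_single when_def)
    ultimately show ?thesis
      unfolding Lj_def
      using xmon_in_prod_ideal_replace_block[where LL = LL and b = "Poly_Mapping.lookup (aj k')",
          OF LL_monomial[OF k'm] x' d _ dvd keys_dv] by blast
  qed
  moreover have "xmon (d - Poly_Mapping.single v 1) \<in> T"
    using keys_dv by (simp add: xmon_in_polyring_iff)
  ultimately have "xmon (d - Poly_Mapping.single v 1) \<in> Lstar T Lj beta lam i k"
    using in_Lstar_if_gen_support[OF i] by blast
  then show ?thesis
    using vT dv by blast
qed

lemma Lstar_drop_var:
  assumes i: "i > 0" and j: "j < beta i" and k: "k < beta (i - 1)" and lk: "lam i k j \<noteq> 0"
    and x: "x \<in> Lstar T Lj beta lam i j" and d: "d \<in> Poly_Mapping.keys x"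
  shows "\<exists>v\<in>Tvars mT. 1 \<le> Poly_Mapping.lookup d v
           \<and> xmon (d - Poly_Mapping.single v 1) \<in> Lstar T Lj beta lam (i - 1) k"
proof (cases "i = 1")
  case True
  then show ?thesis
    using Lj_drop_var[of j x d] j x d beta1 by simp
next
  case False
  then obtain i' where i': "i = Suc i'" "i' \<ge> 1"
    using i by (cases i) auto
  then show ?thesis
    using Lstar_Suc_drop_var[of i' j k x d] j k lk x d by simp
qed

lemma dstar_in_max_ideal_module:
  assumes i: "i > 0" and u: "u \<in> Fstar T Lj beta lam i"
  shows "dstar beta lam i u \<in> module_gen T {(\<lambda>k. g * v k) | g v.
           g \<in> ideal_gen T (var ` Tvars mT) \<and> v \<in> Fstar T Lj beta lam (i - 1)}"
    (is "_ \<in> module_gen T ?G")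
proof -
  define w where "w = dstar beta lam i u"
  have w0: "\<forall>k\<ge>beta (i - 1). w k = 0"
    by (simp add: w_def dstar_def mat_app_def)
  have monomial_term:
    "(\<lambda>k'. cnst (Poly_Mapping.lookup (w k) d) * (if k' = k then xmon d else 0)) \<in> module_gen T ?G"
    if k: "k < beta (i - 1)" and d: "d \<in> Poly_Mapping.keys (w k)" for k d
  proof -
    have "w k = (\<Sum>j<beta i. cnst (lam i k j) * u j)"
      using k by (simp add: w_def dstar_def mat_app_def)
    then obtain j where j: "j < beta i" and d_j: "d \<in> Poly_Mapping.keys (cnst (lam i k j) * u j)"
      using d keys_sum[of "\<lambda>j. cnst (lam i k j) * u j" "{..<beta i}"] by auto
    then have lk: "lam i k j \<noteq> 0"
      by (auto simp: cnst_def)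
    have "u j \<in> Lstar T Lj beta lam i j"
      using u j by (simp add: Fstar_def)
    then obtain v where vT: "v \<in> Tvars mT" and dv: "1 \<le> Poly_Mapping.lookup d v"
      and xin: "xmon (d - Poly_Mapping.single v 1) \<in> Lstar T Lj beta lam (i - 1) k"
      using Lstar_drop_var[OF i j k lk] d_j keys_cnst_mult by blast
    define vv where "vv = (\<lambda>k'. if k' = k then xmon (d - Poly_Mapping.single v 1) else (0::('v \<times> nat, 'k) mpoly))"
    have "0 \<in> Lstar T Lj beta lam (i - 1) k'" for k'
      by (rule zero_in_Lstar) (simp_all add: Lj_def zero_in_prod_ideal zero_in_polyring)
    then have "vv \<in> Fstar T Lj beta lam (i - 1)"
      unfolding Fstar_def vv_def using xin k by auto
    then have "(\<lambda>k'. var v * vv k') \<in> ?G"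
      using var_in_ideal_gen_var[OF vT] by blast
    then have "(\<lambda>k'. cnst (Poly_Mapping.lookup (w k) d) * (var v * vv k')) \<in> module_gen T ?G"
      by (rule module_gen_scaled_gen[OF cnst_in_polyring])
    moreover have "var v * vv k' = (if k' = k then xmon d else 0)" for k'
      unfolding vv_def using var_mult_xmon_diff[OF dv, where 'k = 'k] by simp
    ultimately show ?thesis
      by simp
  qed
  have "w \<in> module_gen T ?G"
    by (subst vector_monomial_expansion[OF w0])
      (intro module_gen_sum finite_lessThan finite_keys monomial_term; simp)
  then show ?thesis
    by (simp add: w_def)
qed

end

theorem lemma2p4:
  fixes I :: "('v::finite, 'k::field) mpoly set"
    and m :: nat and aj :: "nat \<Rightarrow> ('v \<Rightarrow>\<^sub>0 nat)"
    and beta :: "nat \<Rightarrow> nat" and a :: "nat \<Rightarrow> nat \<Rightarrow> ('v \<Rightarrow>\<^sub>0 nat)"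
    and lam :: "nat \<Rightarrow> nat \<Rightarrow> nat \<Rightarrow> 'k" and p :: nat
    and mT :: "'v \<Rightarrow> nat"
    and LL :: "'v \<Rightarrow> nat \<Rightarrow> ('v \<times> nat, 'k) mpoly set"
  assumes monI: "monomial_ideal UNIV I"
    and I_proper: "I \<noteq> UNIV"
    and GI: "mingens I = xmon ` aj ` {..<m}"
    and aj_inj: "inj_on aj {..<m}"
    and res: "is_min_graded_res I beta a lam p"
    and beta1: "beta 1 = m"
    and a1: "\<forall>j<m. a 1 j = aj j"
    and lam1: "\<forall>j<m. lam 1 0 j = 1"
    and LLmon: "\<forall>l. \<forall>j<m. monomial_ideal (polyring (Tlvars mT l)) (LL l (Poly_Mapping.lookup (aj j) l))"
    and LLlin: "\<forall>l. \<forall>j<m. has_linear_resolution (Tlvars mT l) (LL l (Poly_Mapping.lookup (aj j) l)) (Poly_Mapping.lookup (aj j) l)"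
    and LLincl: "\<forall>l. \<forall>j<m. \<forall>k<m. Poly_Mapping.lookup (aj j) l \<ge> Poly_Mapping.lookup (aj k) l
                   \<longrightarrow> LL l (Poly_Mapping.lookup (aj j) l) \<subseteq> LL l (Poly_Mapping.lookup (aj k) l)"
  shows "\<forall>i>0. \<forall>u \<in> Fstar (polyring (Tvars mT))
             (\<lambda>j. ideal_gen (polyring (Tvars mT))
                    {\<Prod>l\<in>UNIV. f l | f. \<forall>l. f l \<in> LL l (Poly_Mapping.lookup (aj j) l)})
             beta lam i.
           dstar beta lam i u \<in>
             module_gen (polyring (Tvars mT))
               {(\<lambda>k. g * v k) | g v. g \<in> ideal_gen (polyring (Tvars mT)) (var ` Tvars mT)
                   \<and> v \<in> Fstar (polyring (Tvars mT))
                          (\<lambda>j. ideal_gen (polyring (Tvars mT))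
                                 {\<Prod>l\<in>UNIV. f l | f. \<forall>l. f l \<in> LL l (Poly_Mapping.lookup (aj j) l)})
                          beta lam (i - 1)}"
proof -
  interpret induced_complex I beta a lam p m aj mT LL
    by unfold_locales (use res beta1 a1 monI I_proper GI LLmon LLlin LLincl in auto)
  have "(\<lambda>j. ideal_gen (polyring (Tvars mT))
              {\<Prod>l\<in>UNIV. f l | f. \<forall>l. f l \<in> LL l (Poly_Mapping.lookup (aj j) l)}) = Lj"
    by (simp add: fun_eq_iff Lj_def prod_ideal_def)
  then show ?thesis
    using dstar_in_max_ideal_module by simp
qed

end
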